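(* For all integers $l\ge1$ and $n\ge1$, the colored Eulerian polynomial $A_n^{(l)}(t)=\sum_{\pi\in C_l\wr\mathfrak{S}_n}t^{\mathrm{fexc}(\pi)}$ is $t$-symmetric and log-concave; in particular it is $t$-unimodal.
   Context: $C_l\wr\mathfrak{S}_n$ is the set of words $\pi=\pi_1\cdots\pi_n$ with $\pi_i=|\pi_i|^{\epsilon_i}$, $\epsilon_i\in\{0,\dots,l-1\}$, and $|\pi_1|\cdots|\pi_n|\in\mathfrak{S}_n$. $\mathrm{exc}(\pi)$ is the number of $i$ with $\epsilon_i=0$ and $|\pi_i|>i$, and $\mathrm{fexc}(\pi)=l\cdot\mathrm{exc}(\pi)+\sum_{i=1}^n\epsilon_i$. A nonzero polynomial $\sum_{i=r}^sa_it^i$ with $a_r,a_s\ne0$ is $t$-symmetric if $a_{r+k}=a_{s-k}$ for all $0\le k\le s-r$; it is log-concave if $a_k^2\ge a_{k-1}a_{k+1}$ for $r<k<s$; it is $t$-unimodal if $a_r\le a_{r+1}\le\dots\le a_{\lfloor(r+s)/2\rfloor}$ and $a_{\lfloor(r+s+1)/2\rfloor}\ge\dots\ge a_s$. *)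

theory Defs
  imports "HOL-Computational_Algebra.Polynomial" "HOL-Combinatorics.Permutations"
begin

text \<open>Colored permutations C_l wr S_n: a pair (sigma, eps) where sigma is a permutation
  of {1..n} (identity outside) giving |pi_i| = sigma i, and eps i in {0..<l} is the color
  of position i (eps fixed to 0 outside {1..n}, so that the representation is unique).\<close>

definition colored_perms :: "nat \<Rightarrow> nat \<Rightarrow> ((nat \<Rightarrow> nat) \<times> (nat \<Rightarrow> nat)) set" where
  "colored_perms l n = {(\<sigma>, \<epsilon>). \<sigma> permutes {1..n} \<and> (\<forall>i\<in>{1..n}. \<epsilon> i < l)
       \<and> (\<forall>i. i \<notin> {1..n} \<longrightarrow> \<epsilon> i = 0)}"

definition exc_col :: "nat \<Rightarrow> (nat \<Rightarrow> nat) \<times> (nat \<Rightarrow> nat) \<Rightarrow> nat" where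
  "exc_col n p = card {i\<in>{1..n}. snd p i = 0 \<and> fst p i > i}"

definition fexc :: "nat \<Rightarrow> nat \<Rightarrow> (nat \<Rightarrow> nat) \<times> (nat \<Rightarrow> nat) \<Rightarrow> nat" where
  "fexc l n p = l * exc_col n p + (\<Sum>i=1..n. snd p i)"

definition colored_eulerian :: "nat \<Rightarrow> nat \<Rightarrow> nat poly" where
  "colored_eulerian l n = (\<Sum>p\<in>colored_perms l n. monom 1 (fexc l n p))"

definition low_deg :: "'a::zero poly \<Rightarrow> nat" where
  "low_deg p = (LEAST i. coeff p i \<noteq> 0)"

definition t_symmetric :: "'a::zero poly \<Rightarrow> bool" where
  "t_symmetric p \<longleftrightarrow> p \<noteq> 0 \<and>
     (\<forall>k\<le>degree p - low_deg p. coeff p (low_deg p + k) = coeff p (degree p - k))"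

definition log_concave_poly :: "'a::linordered_semidom poly \<Rightarrow> bool" where
  "log_concave_poly p \<longleftrightarrow> p \<noteq> 0 \<and>
     (\<forall>k. low_deg p < k \<and> k < degree p \<longrightarrow> coeff p k ^ 2 \<ge> coeff p (k - 1) * coeff p (k + 1))"

definition t_unimodal :: "'a::{zero,linorder} poly \<Rightarrow> bool" where
  "t_unimodal p \<longleftrightarrow> p \<noteq> 0 \<and>
     (\<forall>i j. low_deg p \<le> i \<and> i \<le> j \<and> j \<le> (low_deg p + degree p) div 2
              \<longrightarrow> coeff p i \<le> coeff p j) \<and>
     (\<forall>i j. (low_deg p + degree p + 1) div 2 \<le> i \<and> i \<le> j \<and> j \<le> degree p
              \<longrightarrow> coeff p j \<le> coeff p i)"

end

theory Submission
  imports Defs Complex_Main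
begin

text \<open>Summing over the colours position by position factorises the coloured Eulerian polynomial as
  \<open>A_n^(l)(t) = (1 + t + ... + t^(l-1))^n A_n(t)\<close>, where \<open>A_n\<close> is the Eulerian polynomial counting
  permutations by excedances. Call a coefficient sequence good if it is symmetric and log-concave
  without internal zeros. The coefficients of \<open>1 + t + ... + t^(l-1)\<close> are good, and those of
  \<open>A_n\<close> are good by induction along the recurrence \<open>A(n+1,k) = (k+1) A(n,k) + (n+1-k) A(n,k-1)\<close>,
  which comes from inserting \<open>n + 1\<close> into a permutation of \<open>{1..n}\<close>. Good sequences are closed
  under convolution, i.e. under products of polynomials, and a good sequence increases up to its
  middle, hence is unimodal.\<close>

section \<open>Log-concave sequences\<close>

text \<open>Sequences are indexed by all integers, so that shifts such as \<open>x (k - 1)\<close> need no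
  truncation; \<open>log_concave_seq x d\<close> also asks \<open>x\<close> to be positive exactly on \<open>{0..d}\<close>.\<close>

definition log_concave_seq :: "(int \<Rightarrow> real) \<Rightarrow> int \<Rightarrow> bool" where
  "log_concave_seq x d \<longleftrightarrow> (\<forall>k. 0 \<le> x k) \<and> (\<forall>k. 0 < x k \<longleftrightarrow> 0 \<le> k \<and> k \<le> d)
     \<and> (\<forall>k. x (k - 1) * x (k + 1) \<le> x k ^ 2)"

definition symmetric_seq :: "(int \<Rightarrow> real) \<Rightarrow> int \<Rightarrow> bool" where
  "symmetric_seq x d \<longleftrightarrow> (\<forall>k. x (d - k) = x k)"

lemma log_concave_seqD:
  assumes "log_concave_seq x d"
  shows log_concave_seq_nonneg: "0 \<le> x k"
    and log_concave_seq_pos_iff: "0 < x k \<longleftrightarrow> 0 \<le> k \<and> k \<le> d"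
    and log_concave_seq_ineq: "x (k - 1) * x (k + 1) \<le> x k ^ 2"
  using assms by (auto simp: log_concave_seq_def)

lemma log_concave_seq_eq_0:
  assumes "log_concave_seq x d" "k < 0 \<or> d < k"
  shows "x k = 0"
  using log_concave_seq_nonneg[OF assms(1), of k] log_concave_seq_pos_iff[OF assms(1), of k] assms(2) by auto

lemma log_concave_seq_cross:
  assumes x: "log_concave_seq x d" and "u < v"
  shows "x u * x (v + 1) \<le> x (u + 1) * x v"
proof -
  have "u + 1 \<le> v" using \<open>u < v\<close> by simp
  then show ?thesis
  proof (induction v rule: int_ge_induct)
    case base
    show ?case using log_concave_seq_ineq[OF x, of "u + 1"] by (simp add: power2_eq_square)
  next
    case (step v)
    show ?case
    proof (cases "0 < x v")
      case False
      then have "v < 0 \<or> d < v" using log_concave_seq_pos_iff[OF x, of v] by auto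
      then have "x u = 0 \<or> x (v + 1 + 1) = 0"
        using step.hyps log_concave_seq_eq_0[OF x, of u] log_concave_seq_eq_0[OF x, of "v + 1 + 1"] by auto
      moreover have "0 \<le> x (u + 1) * x (v + 1)"
        by (intro mult_nonneg_nonneg log_concave_seq_nonneg[OF x])
      ultimately show ?thesis by auto
    next
      case True
      have "x v * (x u * x (v + 1 + 1)) \<le> x u * x (v + 1) ^ 2"
        using mult_left_mono[OF log_concave_seq_ineq[OF x, of "v + 1"] log_concave_seq_nonneg[OF x, of u]]
        by (simp add: ac_simps)
      also have "\<dots> \<le> x v * (x (u + 1) * x (v + 1))"
        using mult_right_mono[OF step.IH log_concave_seq_nonneg[OF x, of "v + 1"]]
        by (simp add: power2_eq_square ac_simps)
      finally show ?thesis using True by (simp add: mult_le_cancel_left_pos)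
    qed
  qed
qed

lemma symmetric_log_concave_seq_mono:
  assumes x: "log_concave_seq x d" and sym: "symmetric_seq x d"
    and "0 \<le> i" "i \<le> j" "2 * j \<le> d"
  shows "x i \<le> x j"
proof -
  have step: "x k \<le> x (k + 1)" if "2 * (k + 1) \<le> d" for k
  proof -
    have "x k * x (d - k) \<le> x (k + 1) * x (d - k - 1)"
      using log_concave_seq_cross[OF x, of k "d - k - 1"] that by simp
    then have "x k ^ 2 \<le> x (k + 1) ^ 2"
      using sym unfolding symmetric_seq_def
      by (metis diff_diff_eq power2_eq_square)
    then show ?thesis
      using log_concave_seq_nonneg[OF x] by (simp add: power2_le_iff_abs_le)
  qed
  have "x i \<le> x (i + int m)" if "2 * (i + int m) \<le> d" for m
    using that
  proof (induction m)
    case (Suc m)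
    then have "x i \<le> x (i + int m)" by simp
    also have "\<dots> \<le> x (i + int m + 1)" using Suc.prems by (intro step) simp
    finally show ?case by (simp add: ac_simps)
  qed simp
  from this[of "nat (j - i)"] show ?thesis using assms by simp
qed

text \<open>The sum is truncated to \<open>{0..q}\<close>, so this is the convolution of \<open>a\<close> and \<open>b\<close> only when \<open>b\<close>
  vanishes outside \<open>{0..q}\<close>.\<close>

definition conv_seq :: "(int \<Rightarrow> real) \<Rightarrow> (int \<Rightarrow> real) \<Rightarrow> int \<Rightarrow> int \<Rightarrow> real" where
  "conv_seq a b q k = (\<Sum>i\<in>{0..q}. a (k - i) * b i)"

lemma conv_seq_eq_sum:
  assumes "log_concave_seq b q" "finite A" "{0..q} \<subseteq> A"
  shows "(\<Sum>i\<in>A. a (k - i) * b i) = conv_seq a b q k"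
  unfolding conv_seq_def
  by (rule sum.mono_neutral_right) (use assms log_concave_seq_eq_0[OF assms(1)] in auto)

lemma symmetric_conv_seq:
  assumes "symmetric_seq a p" "symmetric_seq b q"
  shows "symmetric_seq (conv_seq a b q) (p + q)"
  unfolding symmetric_seq_def
proof
  fix k
  have "conv_seq a b q (p + q - k) = (\<Sum>i\<in>{0..q}. a (p + q - k - (q - i)) * b (q - i))"
    unfolding conv_seq_def
    by (rule sum.reindex_bij_witness[where i="\<lambda>i. q - i" and j="\<lambda>i. q - i"]) auto
  also have "\<dots> = (\<Sum>i\<in>{0..q}. a (p - (k - i)) * b (q - i))"
    by (simp add: algebra_simps)
  also have "\<dots> = conv_seq a b q k"
    using assms by (simp add: conv_seq_def symmetric_seq_def)
  finally show "conv_seq a b q (p + q - k) = conv_seq a b q k" .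
qed

lemma log_concave_seq_cross_product_nonneg:
  assumes a: "log_concave_seq a p" and b: "log_concave_seq b q"
  shows "0 \<le> (a (k - i) * a (k - 1 - j) - a (k - j) * a (k - 1 - i)) * (b i * b (j + 1) - b (i + 1) * b j)"
proof -
  have *: "0 \<le> (a (k - i) * a (k - 1 - j) - a (k - j) * a (k - 1 - i)) * (b i * b (j + 1) - b (i + 1) * b j)"
    if "i < j" for i j
  proof (rule mult_nonpos_nonpos)
    have "a (k - 1 - j) * a (k - 1 - i + 1) \<le> a (k - 1 - j + 1) * a (k - 1 - i)"
      using that by (intro log_concave_seq_cross[OF a]) simp
    then show "a (k - i) * a (k - 1 - j) - a (k - j) * a (k - 1 - i) \<le> 0"
      by (simp add: algebra_simps)
    show "b i * b (j + 1) - b (i + 1) * b j \<le> 0"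
      using log_concave_seq_cross[OF b that] by simp
  qed
  have swap: "(x - y) * (u - v) = (y - x) * (v - u)" for x y u v :: real
    by (simp add: algebra_simps)
  consider "i < j" | "i = j" | "j < i" by arith
  then show ?thesis
  proof cases
    case 1
    then show ?thesis by (rule *)
  next
    case 2
    then show ?thesis by simp
  next
    case 3
    from *[OF this] show ?thesis by (simp only: swap mult.commute)
  qed
qed

lemma conv_seq_pos_iff:
  assumes a: "log_concave_seq a p" and b: "log_concave_seq b q" and "0 \<le> p" "0 \<le> q"
  shows "0 < conv_seq a b q k \<longleftrightarrow> 0 \<le> k \<and> k \<le> p + q"
proof
  assume "0 < conv_seq a b q k"
  then obtain i where i: "i \<in> {0..q}" "a (k - i) * b i \<noteq> 0"
    unfolding conv_seq_def by (metis (no_types, lifting) less_irrefl sum.neutral)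
  then have "\<not> (k - i < 0 \<or> p < k - i)" using log_concave_seq_eq_0[OF a] by auto
  then show "0 \<le> k \<and> k \<le> p + q" using i(1) by simp
next
  assume k: "0 \<le> k \<and> k \<le> p + q"
  define i where "i = max 0 (k - p)"
  have i: "i \<in> {0..q}" "0 \<le> k - i" "k - i \<le> p"
    using k assms(3,4) unfolding i_def by auto
  then have "0 < a (k - i) * b i"
    using log_concave_seq_pos_iff[OF a] log_concave_seq_pos_iff[OF b] by simp
  with i(1) show "0 < conv_seq a b q k"
    unfolding conv_seq_def
    by (intro sum_pos2[where i=i]) (simp_all add: log_concave_seq_nonneg[OF a] log_concave_seq_nonneg[OF b])
qed

text \<open>Writing both products of the log-concavity inequality as double sums over \<open>i, j\<close>, the
  difference becomes a sum whose terms, symmetrised in \<open>i, j\<close>, are the non-negative products of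
  \<open>log_concave_seq_cross_product_nonneg\<close>.\<close>

lemma conv_seq_log_concave_ineq:
  assumes a: "log_concave_seq a p" and b: "log_concave_seq b q"
  shows "conv_seq a b q (k - 1) * conv_seq a b q (k + 1) \<le> conv_seq a b q k ^ 2"
proof -
  let ?R = "{-1..q + 1}"
  define g where "g i j = a (k - i) * a (k - 1 - j) * (b i * b (j + 1) - b (i + 1) * b j)" for i j
  have shift: "conv_seq a b q (m + 1) = (\<Sum>i\<in>?R. a (m - i) * b (i + 1))" for m
  proof -
    have "(\<Sum>i\<in>?R. a (m - i) * b (i + 1)) = (\<Sum>j\<in>{0..q + 2}. a (m + 1 - j) * b j)"
      by (rule sum.reindex_bij_witness[where i="\<lambda>j. j - 1" and j="\<lambda>i. i + 1"]) auto
    then show ?thesis using conv_seq_eq_sum[OF b] by simp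
  qed
  have unshift: "conv_seq a b q m = (\<Sum>i\<in>?R. a (m - i) * b i)" for m
    using conv_seq_eq_sum[OF b] by simp
  have "conv_seq a b q k ^ 2 - conv_seq a b q (k - 1) * conv_seq a b q (k + 1)
      = conv_seq a b q k * conv_seq a b q (k - 1 + 1) - conv_seq a b q (k + 1) * conv_seq a b q (k - 1)"
    by (simp add: power2_eq_square)
  also have "\<dots> = (\<Sum>i\<in>?R. a (k - i) * b i) * (\<Sum>j\<in>?R. a (k - 1 - j) * b (j + 1))
        - (\<Sum>i\<in>?R. a (k - i) * b (i + 1)) * (\<Sum>j\<in>?R. a (k - 1 - j) * b j)"
    unfolding shift unshift[of k] unshift[of "k - 1"] ..
  also have "\<dots> = (\<Sum>i\<in>?R. \<Sum>j\<in>?R. g i j)"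
    unfolding sum_product sum_subtractf[symmetric] g_def
    by (intro sum.cong refl) (simp only: right_diff_distrib ac_simps)
  finally have diff: "conv_seq a b q k ^ 2 - conv_seq a b q (k - 1) * conv_seq a b q (k + 1)
      = (\<Sum>i\<in>?R. \<Sum>j\<in>?R. g i j)" .
  have "g i j + g j i = (a (k - i) * a (k - 1 - j) - a (k - j) * a (k - 1 - i))
      * (b i * b (j + 1) - b (i + 1) * b j)" for i j
    unfolding g_def by (simp only: left_diff_distrib right_diff_distrib ac_simps)
  then have "0 \<le> (\<Sum>i\<in>?R. \<Sum>j\<in>?R. g i j + g j i)"
    using log_concave_seq_cross_product_nonneg[OF a b] by (simp add: sum_nonneg)
  also have "\<dots> = 2 * (\<Sum>i\<in>?R. \<Sum>j\<in>?R. g i j)"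
    using sum.swap[of g ?R ?R] by (simp only: sum.distrib mult_2)
  finally show ?thesis using diff by simp
qed

lemma log_concave_conv_seq:
  assumes a: "log_concave_seq a p" and b: "log_concave_seq b q" and "0 \<le> p" "0 \<le> q"
  shows "log_concave_seq (conv_seq a b q) (p + q)"
proof -
  have "0 \<le> conv_seq a b q k" for k
    unfolding conv_seq_def
    by (intro sum_nonneg mult_nonneg_nonneg log_concave_seq_nonneg[OF a] log_concave_seq_nonneg[OF b])
  then show ?thesis
    unfolding log_concave_seq_def using conv_seq_pos_iff[OF assms] conv_seq_log_concave_ineq[OF a b]
    by simp
qed

section \<open>Log-concavity along the Eulerian recurrence\<close>

text \<open>This is the log-concavity of \<open>y k = (k + 1) x k + (n + 1 - k) x (k - 1)\<close> at \<open>k = K\<close>,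
  \<open>n = N\<close>, written in terms of \<open>x0, \<dots>, x3 = x (K - 2), \<dots>, x (K + 1)\<close>.\<close>

lemma eulerian_step_ineq:
  fixes K N x0 x1 x2 x3 :: real
  assumes "1 \<le> K" "1 \<le> N - K"
    and "0 \<le> x0" "0 \<le> x1" "0 \<le> x2" "0 \<le> x3"
    and h1: "x0 * x2 \<le> x1 ^ 2" and h2: "x1 * x3 \<le> x2 ^ 2" and h3: "x0 * x3 \<le> x1 * x2"
  shows "(K * x1 + (N + 2 - K) * x0) * ((K + 2) * x3 + (N - K) * x2)
    \<le> ((K + 1) * x2 + (N + 1 - K) * x1) ^ 2"
proof -
  have "(K * (K + 2)) * (x1 * x3) \<le> (K * (K + 2)) * x2 ^ 2"
    using assms by (intro mult_left_mono[OF h2]) simp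
  moreover have "((N + 2 - K) * (N - K)) * (x0 * x2) \<le> ((N + 2 - K) * (N - K)) * x1 ^ 2"
    using assms by (intro mult_left_mono[OF h1]) simp
  moreover have "((N + 2 - K) * (K + 2)) * (x0 * x3) \<le> ((N + 2 - K) * (K + 2)) * (x1 * x2)"
    using assms by (intro mult_left_mono[OF h3]) simp
  moreover have "(K * x1 + (N + 2 - K) * x0) * ((K + 2) * x3 + (N - K) * x2)
      = (K * (K + 2)) * (x1 * x3) + (K * (N - K)) * (x1 * x2)
        + ((N + 2 - K) * (K + 2)) * (x0 * x3) + ((N + 2 - K) * (N - K)) * (x0 * x2)"
    by (simp add: algebra_simps)
  moreover have "((K + 1) * x2 + (N + 1 - K) * x1) ^ 2
      = (K * (K + 2)) * x2 ^ 2 + (K * (N - K)) * (x1 * x2) + ((N + 2 - K) * (K + 2)) * (x1 * x2)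
        + ((N + 2 - K) * (N - K)) * x1 ^ 2 + (x2 - x1) ^ 2"
    by (simp add: algebra_simps power2_eq_square)
  ultimately show ?thesis
    using zero_le_power2[of "x2 - x1"] by linarith
qed

lemma symmetric_seq_eulerian_step:
  fixes x y :: "int \<Rightarrow> real" and n :: nat
  assumes x: "symmetric_seq x (int n - 1)"
    and y: "\<And>k. y k = (of_int k + 1) * x k + (of_nat n + 1 - of_int k) * x (k - 1)"
  shows "symmetric_seq y (int n)"
  unfolding symmetric_seq_def
proof
  fix k
  have sym: "x (int n - 1 - j) = x j" for j
    using x by (simp add: symmetric_seq_def)
  have "x (int n - k) = x (k - 1)" "x (int n - k - 1) = x k"
    using sym[of "k - 1"] sym[of k] by (simp_all add: diff_diff_eq add.commute)
  then have "y (int n - k) = (of_int (int n - k) + 1) * x (k - 1) + (of_nat n + 1 - of_int (int n - k)) * x k"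
    by (simp only: y)
  also have "\<dots> = y k"
    by (simp add: y algebra_simps)
  finally show "y (int n - k) = y k" .
qed

lemma log_concave_seq_eulerian_step_ineq:
  fixes x y :: "int \<Rightarrow> real" and n :: nat
  assumes x: "log_concave_seq x (int n - 1)" and k: "1 \<le> k" "k \<le> int n - 1"
    and y: "\<And>k. y k = (of_int k + 1) * x k + (of_nat n + 1 - of_int k) * x (k - 1)"
  shows "y (k - 1) * y (k + 1) \<le> y k ^ 2"
proof -
  have y_pred: "y (k - 1) = of_int k * x (k - 1) + (of_nat n + 2 - of_int k) * x (k - 2)"
    by (simp add: y algebra_simps)
  have y_succ: "y (k + 1) = (of_int k + 2) * x (k + 1) + (of_nat n - of_int k) * x k"
    by (simp add: y algebra_simps)
  show ?thesis
    unfolding y_pred y_succ y[of k]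
  proof (rule eulerian_step_ineq)
    show "x (k - 2) * x k \<le> x (k - 1) ^ 2"
      using log_concave_seq_ineq[OF x, of "k - 1"] by simp
    show "x (k - 1) * x (k + 1) \<le> x k ^ 2"
      using log_concave_seq_ineq[OF x, of k] .
    show "x (k - 2) * x (k + 1) \<le> x (k - 1) * x k"
      using log_concave_seq_cross[OF x, of "k - 2" k] by simp
  qed (use k in \<open>simp_all add: log_concave_seq_nonneg[OF x]\<close>)
qed

lemma log_concave_seq_eulerian_step:
  fixes x y :: "int \<Rightarrow> real" and n :: nat
  assumes x: "log_concave_seq x (int n - 1)" and "1 \<le> n"
    and y: "\<And>k. y k = (of_int k + 1) * x k + (of_nat n + 1 - of_int k) * x (k - 1)"
  shows "log_concave_seq y (int n)"
proof -
  note nonneg = log_concave_seq_nonneg[OF x] and pos_iff = log_concave_seq_pos_iff[OF x]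
  have term1: "0 \<le> (of_int k + 1) * x k" for k
    using nonneg[of k] log_concave_seq_eq_0[OF x, of k] by (cases "k < 0") simp_all
  have term2: "0 \<le> (of_nat n + 1 - of_int k) * x (k - 1)" for k
    using nonneg[of "k - 1"] log_concave_seq_eq_0[OF x, of "k - 1"] by (cases "int n < k") simp_all
  have y_nonneg: "0 \<le> y k" for k
    using term1[of k] term2[of k] by (simp add: y)
  have y_pos_iff: "0 < y k \<longleftrightarrow> 0 \<le> k \<and> k \<le> int n" for k
  proof
    assume "0 < y k"
    then have "x k \<noteq> 0 \<or> x (k - 1) \<noteq> 0" by (auto simp: y)
    then show "0 \<le> k \<and> k \<le> int n"
      using log_concave_seq_eq_0[OF x, of k] log_concave_seq_eq_0[OF x, of "k - 1"] by linarith
  next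
    assume k: "0 \<le> k \<and> k \<le> int n"
    show "0 < y k"
    proof (cases "k \<le> int n - 1")
      case True
      then have "0 < (of_int k + 1) * x k" using k pos_iff[of k] by simp
      then show ?thesis using term2[of k] by (simp add: y)
    next
      case False
      then have "0 < (of_nat n + 1 - of_int k) * x (k - 1)" using k pos_iff[of "k - 1"] \<open>1 \<le> n\<close> by simp
      then show ?thesis using term1[of k] by (simp add: y)
    qed
  qed
  have y_ineq: "y (k - 1) * y (k + 1) \<le> y k ^ 2" for k
  proof (cases "0 < y (k - 1) \<and> 0 < y (k + 1)")
    case False
    then have "y (k - 1) * y (k + 1) = 0"
      using y_nonneg[of "k - 1"] y_nonneg[of "k + 1"] by (simp add: order_le_less)
    then show ?thesis by (metis zero_le_power2)
  next
    case True
    then have "1 \<le> k" "k \<le> int n - 1"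
      using y_pos_iff[of "k - 1"] y_pos_iff[of "k + 1"] by simp_all
    then show ?thesis by (rule log_concave_seq_eulerian_step_ineq[OF x _ _ y])
  qed
  show ?thesis
    unfolding log_concave_seq_def using y_nonneg y_pos_iff y_ineq by simp
qed

section \<open>Coefficient sequences of polynomials\<close>

definition coeff_seq :: "nat poly \<Rightarrow> int \<Rightarrow> real" where
  "coeff_seq P k = (if 0 \<le> k then real (coeff P (nat k)) else 0)"

lemma coeff_seq_of_nat [simp]: "coeff_seq P (int i) = real (coeff P i)"
  by (simp add: coeff_seq_def)

lemma coeff_seq_mult:
  "coeff_seq (P * Q) k = conv_seq (coeff_seq P) (coeff_seq Q) (int (degree Q)) k"
proof (cases "0 \<le> k")
  case False
  then show ?thesis by (simp add: coeff_seq_def conv_seq_def)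
next
  case True
  then obtain m where k: "k = int m" by (metis nonneg_int_cases)
  have "coeff_seq (P * Q) k = (\<Sum>i\<le>m. real (coeff Q i) * real (coeff P (m - i)))"
    by (simp add: k coeff_mult mult.commute[of P])
  also have "\<dots> = (\<Sum>i\<le>m. coeff_seq P (k - int i) * coeff_seq Q (int i))"
    by (intro sum.cong refl) (auto simp: k coeff_seq_def nat_diff_distrib)
  also have "\<dots> = (\<Sum>i\<le>m + degree Q. coeff_seq P (k - int i) * coeff_seq Q (int i))"
    by (rule sum.mono_neutral_left) (auto simp: k coeff_seq_def)
  also have "\<dots> = (\<Sum>i\<le>degree Q. coeff_seq P (k - int i) * coeff_seq Q (int i))"
    by (rule sum.mono_neutral_right) (auto simp: coeff_eq_0)
  also have "\<dots> = conv_seq (coeff_seq P) (coeff_seq Q) (int (degree Q)) k"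
    unfolding conv_seq_def
    by (rule sum.reindex_bij_witness[where i=nat and j=int]) auto
  finally show ?thesis .
qed

lemma degree_eq_if_log_concave_seq:
  assumes "log_concave_seq (coeff_seq P) (int d)"
  shows "degree P = d"
proof (rule antisym)
  show "degree P \<le> d"
  proof (intro degree_le allI impI)
    fix i assume "d < i"
    then show "coeff P i = 0" using log_concave_seq_eq_0[OF assms, of "int i"] by simp
  qed
  show "d \<le> degree P"
    using log_concave_seq_pos_iff[OF assms, of "int d"] by (intro le_degree) simp
qed

definition sym_log_concave_poly :: "nat poly \<Rightarrow> bool" where
  "sym_log_concave_poly P \<longleftrightarrow> log_concave_seq (coeff_seq P) (int (degree P))
     \<and> symmetric_seq (coeff_seq P) (int (degree P))"

lemma sym_log_concave_polyI:
  assumes "log_concave_seq (coeff_seq P) (int d)" "symmetric_seq (coeff_seq P) (int d)"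
  shows "sym_log_concave_poly P"
  using assms degree_eq_if_log_concave_seq[OF assms(1)] by (simp add: sym_log_concave_poly_def)

lemma sym_log_concave_poly_one: "sym_log_concave_poly 1"
proof (rule sym_log_concave_polyI[where d=0])
  have "coeff_seq 1 = (\<lambda>k. if k = 0 then 1 else 0)"
    by (auto simp: fun_eq_iff coeff_seq_def nat_eq_iff)
  then show "log_concave_seq (coeff_seq 1) (int 0)" "symmetric_seq (coeff_seq 1) (int 0)"
    by (auto simp: log_concave_seq_def symmetric_seq_def)
qed

lemma sym_log_concave_poly_mult:
  assumes "sym_log_concave_poly P" "sym_log_concave_poly Q"
  shows "sym_log_concave_poly (P * Q)"
proof (rule sym_log_concave_polyI[where d="degree P + degree Q"])
  have "coeff_seq (P * Q) = conv_seq (coeff_seq P) (coeff_seq Q) (int (degree Q))"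
    by (simp add: fun_eq_iff coeff_seq_mult)
  then show "log_concave_seq (coeff_seq (P * Q)) (int (degree P + degree Q))"
    "symmetric_seq (coeff_seq (P * Q)) (int (degree P + degree Q))"
    using assms by (simp_all add: sym_log_concave_poly_def log_concave_conv_seq symmetric_conv_seq)
qed

lemma sym_log_concave_poly_power: "sym_log_concave_poly P \<Longrightarrow> sym_log_concave_poly (P ^ m)"
  by (induction m) (simp_all add: sym_log_concave_poly_one sym_log_concave_poly_mult)

lemma sym_log_concave_poly_coeff_pos:
  "sym_log_concave_poly P \<Longrightarrow> i \<le> degree P \<Longrightarrow> 0 < coeff P i"
  using log_concave_seq_pos_iff[of "coeff_seq P" "int (degree P)" "int i"]
  by (simp add: sym_log_concave_poly_def)

lemma low_deg_eq_0_if_sym_log_concave_poly: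
  assumes "sym_log_concave_poly P"
  shows "low_deg P = 0"
  unfolding low_deg_def
  by (rule Least_equality) (use sym_log_concave_poly_coeff_pos[OF assms, of 0] in auto)

lemma sym_log_concave_poly_coeff_sym:
  assumes "sym_log_concave_poly P" "k \<le> degree P"
  shows "coeff P (degree P - k) = coeff P k"
proof -
  have "coeff_seq P (int (degree P) - int k) = coeff_seq P (int k)"
    using assms(1) by (simp add: sym_log_concave_poly_def symmetric_seq_def)
  moreover have "int (degree P) - int k = int (degree P - k)" using assms(2) by simp
  ultimately show ?thesis by (simp only: coeff_seq_of_nat of_nat_eq_iff)
qed

lemma sym_log_concave_poly_coeff_mono:
  assumes "sym_log_concave_poly P" "i \<le> j" "2 * j \<le> degree P"
  shows "coeff P i \<le> coeff P j"
  using symmetric_log_concave_seq_mono[of "coeff_seq P" "int (degree P)" "int i" "int j"] assms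
  by (simp add: sym_log_concave_poly_def)

lemma t_symmetric_if_sym_log_concave_poly:
  assumes "sym_log_concave_poly P"
  shows "t_symmetric P"
proof -
  have "P \<noteq> 0" using sym_log_concave_poly_coeff_pos[OF assms, of 0] by auto
  then show ?thesis
    using sym_log_concave_poly_coeff_sym[OF assms]
    by (simp add: t_symmetric_def low_deg_eq_0_if_sym_log_concave_poly[OF assms])
qed

lemma log_concave_poly_if_sym_log_concave_poly:
  assumes "sym_log_concave_poly P"
  shows "log_concave_poly P"
proof -
  have "coeff P (k - 1) * coeff P (k + 1) \<le> coeff P k ^ 2" if "0 < k" for k
  proof -
    have "coeff_seq P (int k - 1) * coeff_seq P (int k + 1) \<le> coeff_seq P (int k) ^ 2"
      using assms log_concave_seq_ineq[of "coeff_seq P" "int (degree P)" "int k"]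
      by (simp add: sym_log_concave_poly_def)
    moreover have "int k - 1 = int (k - 1)" "int k + 1 = int (k + 1)" using that by simp_all
    ultimately have "real (coeff P (k - 1) * coeff P (k + 1)) \<le> real (coeff P k ^ 2)"
      by (simp only: coeff_seq_of_nat of_nat_mult of_nat_power)
    then show ?thesis by (simp only: of_nat_le_iff)
  qed
  moreover have "P \<noteq> 0" using sym_log_concave_poly_coeff_pos[OF assms, of 0] by auto
  ultimately show ?thesis
    by (simp add: log_concave_poly_def low_deg_eq_0_if_sym_log_concave_poly[OF assms])
qed

lemma t_unimodal_if_sym_log_concave_poly:
  assumes "sym_log_concave_poly P"
  shows "t_unimodal P"
  unfolding t_unimodal_def low_deg_eq_0_if_sym_log_concave_poly[OF assms]
proof (intro conjI allI impI)
  show "P \<noteq> 0" using sym_log_concave_poly_coeff_pos[OF assms, of 0] by auto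
  fix i j
  show "coeff P i \<le> coeff P j" if "0 \<le> i \<and> i \<le> j \<and> j \<le> (0 + degree P) div 2"
    using that by (intro sym_log_concave_poly_coeff_mono[OF assms]) auto
  show "coeff P j \<le> coeff P i" if "(0 + degree P + 1) div 2 \<le> i \<and> i \<le> j \<and> j \<le> degree P"
  proof -
    have "coeff P (degree P - j) \<le> coeff P (degree P - i)"
      using that by (intro sym_log_concave_poly_coeff_mono[OF assms]) auto
    then show ?thesis using that sym_log_concave_poly_coeff_sym[OF assms] by simp
  qed
qed

section \<open>Eulerian polynomials\<close>

definition perm_exc :: "nat \<Rightarrow> (nat \<Rightarrow> nat) \<Rightarrow> nat" where
  "perm_exc n \<sigma> = card {i\<in>{1..n}. i < \<sigma> i}"

definition eulerian_num :: "nat \<Rightarrow> nat \<Rightarrow> nat" where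
  "eulerian_num n k = card {\<sigma>. \<sigma> permutes {1..n} \<and> perm_exc n \<sigma> = k}"

definition eulerian_poly :: "nat \<Rightarrow> nat poly" where
  "eulerian_poly n = (\<Sum>\<sigma> | \<sigma> permutes {1..n}. monom 1 (perm_exc n \<sigma>))"

lemma card_filter_eq_sum: "finite A \<Longrightarrow> card {x\<in>A. P x} = (\<Sum>x\<in>A. if P x then 1 else 0)"
  by (simp add: sum.inter_filter[symmetric])

lemma eulerian_num_eq_sum:
  "eulerian_num n k = (\<Sum>\<sigma> | \<sigma> permutes {1..n}. if perm_exc n \<sigma> = k then 1 else 0)"
proof -
  have "finite {\<sigma>. \<sigma> permutes {1..n}}" by (simp add: finite_permutations)
  from card_filter_eq_sum[OF this, of "\<lambda>\<sigma>. perm_exc n \<sigma> = k"] show ?thesis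
    by (simp only: eulerian_num_def mem_Collect_eq)
qed

lemma coeff_eulerian_poly: "coeff (eulerian_poly n) k = eulerian_num n k"
  unfolding eulerian_poly_def eulerian_num_eq_sum by (simp add: coeff_sum cong: if_cong)

lemma perm_exc_le: "perm_exc n \<sigma> \<le> n"
proof -
  have "card {i\<in>{1..n}. i < \<sigma> i} \<le> card {1..n}" by (intro card_mono) auto
  then show ?thesis by (simp add: perm_exc_def)
qed

lemma perm_exc_Suc:
  assumes "\<sigma> permutes {1..n}"
  shows "perm_exc (Suc n) \<sigma> = perm_exc n \<sigma>"
proof -
  have "\<sigma> (Suc n) = Suc n" using permutes_not_in[OF assms] by simp
  then have "{i\<in>{1..Suc n}. i < \<sigma> i} = {i\<in>{1..n}. i < \<sigma> i}" by (auto simp: le_Suc_eq)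
  then show ?thesis by (simp add: perm_exc_def)
qed

lemma card_inv_less_eq_perm_exc:
  assumes \<sigma>: "\<sigma> permutes {1..n}"
  shows "card {b\<in>{1..n}. inv \<sigma> b < b} = perm_exc n \<sigma>"
proof -
  note inv = permutes_inverses[OF \<sigma>] and inv_in = permutes_in_image[OF permutes_inv[OF \<sigma>]]
  have "{b\<in>{1..n}. inv \<sigma> b < b} = \<sigma> ` {i\<in>{1..n}. i < \<sigma> i}"
  proof (intro set_eqI iffI)
    fix b assume b: "b \<in> {b\<in>{1..n}. inv \<sigma> b < b}"
    then have "inv \<sigma> b \<in> {i\<in>{1..n}. i < \<sigma> i}" using inv(1)[of b] inv_in[of b] by simp
    then show "b \<in> \<sigma> ` {i\<in>{1..n}. i < \<sigma> i}" using inv(1)[of b] by (metis image_eqI)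
  next
    fix b assume "b \<in> \<sigma> ` {i\<in>{1..n}. i < \<sigma> i}"
    then obtain i where "b = \<sigma> i" "i \<in> {1..n}" "i < \<sigma> i" by blast
    then show "b \<in> {b\<in>{1..n}. inv \<sigma> b < b}" using inv(2)[of i] permutes_in_image[OF \<sigma>, of i] by simp
  qed
  moreover have "inj_on \<sigma> {i\<in>{1..n}. i < \<sigma> i}"
    using permutes_inj[OF \<sigma>] by (auto intro: inj_on_subset)
  ultimately show ?thesis by (simp add: card_image perm_exc_def)
qed

text \<open>In cycle notation, \<open>transpose (Suc n) b \<circ> \<sigma>\<close> inserts \<open>n + 1\<close> into the cycle of \<open>\<sigma>\<close> just
  before \<open>b\<close>. This makes \<open>inv \<sigma> b\<close> an excedance and leaves all other positions unchanged.\<close>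

lemma perm_exc_insert:
  assumes \<sigma>: "\<sigma> permutes {1..n}" and b: "b \<in> {1..n}"
  shows "perm_exc (Suc n) (transpose (Suc n) b \<circ> \<sigma>) =
    (if inv \<sigma> b < b then perm_exc n \<sigma> else Suc (perm_exc n \<sigma>))"
proof -
  define j where "j = inv \<sigma> b"
  have \<sigma>j: "\<sigma> j = b" and j: "j \<in> {1..n}"
    using b permutes_inverses(1)[OF \<sigma>] permutes_in_image[OF permutes_inv[OF \<sigma>]] by (auto simp: j_def)
  have \<sigma>_Suc: "\<sigma> (Suc n) = Suc n" using permutes_not_in[OF \<sigma>] by simp
  have val: "transpose (Suc n) b (\<sigma> i) = (if i = j then Suc n else if i = Suc n then b else \<sigma> i)" for i
  proof (cases "i = j \<or> i = Suc n")
    case True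
    then show ?thesis using \<sigma>j \<sigma>_Suc j by (auto simp: transpose_def)
  next
    case False
    have "\<sigma> i \<noteq> b" using False \<sigma>j by (metis permutes_inj[OF \<sigma>] inj_eq)
    moreover have "\<sigma> i \<noteq> Suc n"
      using permutes_in_image[OF \<sigma>, of i] permutes_not_in[OF \<sigma>, of i] False by (cases "i \<in> {1..n}") auto
    ultimately show ?thesis using False by (simp add: transpose_def)
  qed
  have "{i\<in>{1..Suc n}. i < (transpose (Suc n) b \<circ> \<sigma>) i} = insert j {i\<in>{1..n}. i < \<sigma> i}"
    using j b by (auto simp: val le_Suc_eq)
  then have "perm_exc (Suc n) (transpose (Suc n) b \<circ> \<sigma>) = card (insert j {i\<in>{1..n}. i < \<sigma> i})"
    by (simp only: perm_exc_def)
  moreover have "j \<in> {i\<in>{1..n}. i < \<sigma> i} \<longleftrightarrow> inv \<sigma> b < b"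
    using j \<sigma>j by (simp add: j_def)
  ultimately show ?thesis by (simp add: card_insert_if perm_exc_def)
qed

lemma count_insertions_perm_exc:
  assumes \<sigma>: "\<sigma> permutes {1..n}"
  shows "(\<Sum>b\<in>insert (Suc n) {1..n}. if perm_exc (Suc n) (transpose (Suc n) b \<circ> \<sigma>) = k then 1 else 0)
    = (k + 1) * (if perm_exc n \<sigma> = k then 1 else 0)
      + (if 1 \<le> k then (n + 1 - k) * (if perm_exc n \<sigma> = k - 1 then 1 else 0) else 0)"
proof -
  let ?e = "perm_exc n \<sigma>"
  let ?ind = "\<lambda>P. if P then 1 else 0 :: nat"
  have "card {b\<in>{1..n}. \<not> inv \<sigma> b < b} = card ({1..n} - {b\<in>{1..n}. inv \<sigma> b < b})"
    by (rule arg_cong[where f=card]) auto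
  also have "\<dots> = n - ?e"
    using card_inv_less_eq_perm_exc[OF \<sigma>] by (subst card_Diff_subset) auto
  finally have card_not_less: "card {b\<in>{1..n}. \<not> inv \<sigma> b < b} = n - ?e" .
  have "(\<Sum>b\<in>{1..n}. ?ind (perm_exc (Suc n) (transpose (Suc n) b \<circ> \<sigma>) = k))
      = (\<Sum>b\<in>{1..n}. if inv \<sigma> b < b then ?ind (?e = k) else ?ind (Suc ?e = k))"
    by (intro sum.cong refl) (simp add: perm_exc_insert[OF \<sigma>])
  also have "\<dots> = ?e * ?ind (?e = k) + (n - ?e) * ?ind (Suc ?e = k)"
    using card_inv_less_eq_perm_exc[OF \<sigma>] card_not_less by (simp add: sum.If_cases Int_def)
  finally have "(\<Sum>b\<in>insert (Suc n) {1..n}. ?ind (perm_exc (Suc n) (transpose (Suc n) b \<circ> \<sigma>) = k))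
      = ?ind (?e = k) + (?e * ?ind (?e = k) + (n - ?e) * ?ind (Suc ?e = k))"
    by (simp add: perm_exc_Suc[OF \<sigma>])
  also have "\<dots> = (k + 1) * ?ind (?e = k) + (if 1 \<le> k then (n + 1 - k) * ?ind (?e = k - 1) else 0)"
    using perm_exc_le[of n \<sigma>] by (cases "?e = k"; cases "Suc ?e = k") auto
  finally show ?thesis .
qed

lemma eulerian_num_Suc:
  "eulerian_num (Suc n) k
    = (k + 1) * eulerian_num n k + (if 1 \<le> k then (n + 1 - k) * eulerian_num n (k - 1) else 0)"
proof -
  let ?S = "{\<sigma>. \<sigma> permutes {1..n}}"
  let ?ind = "\<lambda>P. if P then 1 else 0 :: nat"
  have "{1..Suc n} = insert (Suc n) {1..n}" by auto
  then have "eulerian_num (Suc n) k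
      = (\<Sum>b\<in>insert (Suc n) {1..n}. \<Sum>\<sigma>\<in>?S. ?ind (perm_exc (Suc n) (transpose (Suc n) b \<circ> \<sigma>) = k))"
    unfolding eulerian_num_eq_sum by (simp only:) (rule sum_over_permutations_insert, auto)
  also have "\<dots> = (\<Sum>\<sigma>\<in>?S. (k + 1) * ?ind (perm_exc n \<sigma> = k)
      + (if 1 \<le> k then (n + 1 - k) * ?ind (perm_exc n \<sigma> = k - 1) else 0))"
    by (subst sum.swap) (rule sum.cong[OF refl], rule count_insertions_perm_exc, simp)
  also have "\<dots> = (k + 1) * eulerian_num n k + (if 1 \<le> k then (n + 1 - k) * eulerian_num n (k - 1) else 0)"
    by (cases "1 \<le> k") (simp_all add: eulerian_num_eq_sum sum.distrib sum_distrib_left)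
  finally show ?thesis .
qed

lemma eulerian_num_0: "eulerian_num 0 k = (if k = 0 then 1 else 0)"
proof -
  have "{\<sigma>. \<sigma> permutes {1..0::nat}} = {id}" by simp
  then show ?thesis by (simp add: eulerian_num_eq_sum perm_exc_def)
qed

lemma eulerian_num_eq_0: "max 1 n \<le> k \<Longrightarrow> eulerian_num n k = 0"
  by (induction n arbitrary: k) (simp_all add: eulerian_num_0 eulerian_num_Suc)

lemma coeff_seq_eulerian_poly_Suc:
  assumes "1 \<le> n"
  shows "coeff_seq (eulerian_poly (Suc n)) k
    = (of_int k + 1) * coeff_seq (eulerian_poly n) k + (of_nat n + 1 - of_int k) * coeff_seq (eulerian_poly n) (k - 1)"
proof (cases "k \<le> 0")
  case True
  show ?thesis
  proof (cases "k = 0")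
    case True
    then show ?thesis using eulerian_num_Suc[of n 0] by (simp add: coeff_eulerian_poly coeff_seq_def)
  next
    case False
    with \<open>k \<le> 0\<close> show ?thesis by (simp add: coeff_seq_def)
  qed
next
  case False
  define j where "j = nat k"
  have k: "k = int j" and "1 \<le> j" using False by (simp_all add: j_def)
  have rec: "eulerian_num (Suc n) j = (j + 1) * eulerian_num n j + (n + 1 - j) * eulerian_num n (j - 1)"
    using eulerian_num_Suc[of n j] \<open>1 \<le> j\<close> by simp
  have c: "coeff_seq (eulerian_poly n) (k - 1) = eulerian_num n (j - 1)"
    "coeff_seq (eulerian_poly n) k = eulerian_num n j"
    "coeff_seq (eulerian_poly (Suc n)) k = eulerian_num (Suc n) j"
    using \<open>1 \<le> j\<close> by (simp_all add: k coeff_seq_def coeff_eulerian_poly nat_diff_distrib')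
  show ?thesis
  proof (cases "j \<le> n + 1")
    case True
    have "real (eulerian_num (Suc n) j)
        = real (j + 1) * eulerian_num n j + real (n + 1 - j) * eulerian_num n (j - 1)"
      by (simp only: rec of_nat_add of_nat_mult)
    moreover have "real (n + 1 - j) = real n + 1 - real j" using True by (simp add: of_nat_diff)
    ultimately show ?thesis unfolding c by (simp add: k ac_simps)
  next
    case False
    then have "eulerian_num n (j - 1) = 0" "eulerian_num n j = 0"
      using assms by (simp_all add: eulerian_num_eq_0)
    then show ?thesis unfolding c by (simp add: rec)
  qed
qed

lemma sym_log_concave_poly_eulerian_poly:
  assumes "1 \<le> n"
  shows "sym_log_concave_poly (eulerian_poly n)"
proof -
  have "log_concave_seq (coeff_seq (eulerian_poly n)) (int n - 1)
      \<and> symmetric_seq (coeff_seq (eulerian_poly n)) (int n - 1)"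
    using assms
  proof (induction n rule: nat_induct_at_least)
    case base
    have "eulerian_num 1 j = (if j = 0 then 1 else 0)" for j
      using eulerian_num_Suc[of 0 j] by (simp add: eulerian_num_0)
    then have "coeff_seq (eulerian_poly 1) = (\<lambda>k. if k = 0 then 1 else 0)"
      by (auto simp: fun_eq_iff coeff_seq_def coeff_eulerian_poly)
    then show ?case by (auto simp: log_concave_seq_def symmetric_seq_def)
  next
    case (Suc n)
    note rec = coeff_seq_eulerian_poly_Suc[OF Suc.hyps]
    from Suc.IH have "log_concave_seq (coeff_seq (eulerian_poly (Suc n))) (int n)"
      "symmetric_seq (coeff_seq (eulerian_poly (Suc n))) (int n)"
      using log_concave_seq_eulerian_step[OF _ Suc.hyps rec] symmetric_seq_eulerian_step[OF _ rec] by blast+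
    then show ?case by simp
  qed
  moreover have "int n - 1 = int (n - 1)" using assms by simp
  ultimately show ?thesis by (metis sym_log_concave_polyI)
qed

section \<open>Coloured Eulerian polynomials\<close>

definition geom_poly :: "nat \<Rightarrow> nat poly" where
  "geom_poly l = (\<Sum>e<l. monom 1 e)"

lemma sym_log_concave_poly_geom_poly:
  assumes "1 \<le> l"
  shows "sym_log_concave_poly (geom_poly l)"
proof (rule sym_log_concave_polyI[where d="l - 1"])
  have "coeff_seq (geom_poly l) = (\<lambda>k. if 0 \<le> k \<and> k \<le> int (l - 1) then 1 else 0)"
    using assms by (auto simp: fun_eq_iff coeff_seq_def geom_poly_def coeff_sum)
  then show "log_concave_seq (coeff_seq (geom_poly l)) (int (l - 1))"
    "symmetric_seq (coeff_seq (geom_poly l)) (int (l - 1))"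
    by (auto simp: log_concave_seq_def symmetric_seq_def)
qed

lemma prod_sum_dflt:
  fixes f :: "'a \<Rightarrow> 'b \<Rightarrow> 'c::comm_semiring_1"
  assumes "finite A" "\<And>x. x \<in> A \<Longrightarrow> finite (B x)"
  shows "(\<Prod>x\<in>A. \<Sum>y\<in>B x. f x y)
    = (\<Sum>g | (\<forall>x\<in>A. g x \<in> B x) \<and> (\<forall>x. x \<notin> A \<longrightarrow> g x = d). \<Prod>x\<in>A. f x (g x))"
proof -
  have "(\<Prod>x\<in>A. \<Sum>y\<in>B x. f x y) = (\<Sum>g\<in>PiE A B. \<Prod>x\<in>A. f x (g x))"
    by (rule prod_sum_PiE) (use assms in auto)
  also have "\<dots> = (\<Sum>g | (\<forall>x\<in>A. g x \<in> B x) \<and> (\<forall>x. x \<notin> A \<longrightarrow> g x = d). \<Prod>x\<in>A. f x (g x))"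
    by (rule sum.reindex_bij_witness[where i="\<lambda>g. restrict g A" and j="\<lambda>g x. if x \<in> A then g x else d"])
      (auto simp: fun_eq_iff PiE_def extensional_def)
  finally show ?thesis .
qed

lemma monom_one_sum: "monom (1::'a::comm_semiring_1) (\<Sum>i\<in>A. f i) = (\<Prod>i\<in>A. monom 1 (f i))"
  by (simp add: monom_altdef power_sum)

lemma fexc_eq_sum:
  "fexc l n (\<sigma>, \<epsilon>) = (\<Sum>i\<in>{1..n}. if \<epsilon> i = 0 \<and> i < \<sigma> i then l else \<epsilon> i)"
proof -
  have "exc_col n (\<sigma>, \<epsilon>) = (\<Sum>i\<in>{1..n}. if \<epsilon> i = 0 \<and> i < \<sigma> i then 1 else 0)"
    unfolding exc_col_def fst_conv snd_conv by (rule card_filter_eq_sum) simp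
  then have "fexc l n (\<sigma>, \<epsilon>) = (\<Sum>i\<in>{1..n}. l * (if \<epsilon> i = 0 \<and> i < \<sigma> i then 1 else 0) + \<epsilon> i)"
    by (simp add: fexc_def sum_distrib_left sum.distrib)
  also have "\<dots> = (\<Sum>i\<in>{1..n}. if \<epsilon> i = 0 \<and> i < \<sigma> i then l else \<epsilon> i)"
    by (rule sum.cong) auto
  finally show ?thesis .
qed

text \<open>Colour \<open>0\<close> at an excedance contributes \<open>t^l\<close> instead of \<open>t^0\<close>, which turns
  \<open>1 + t + ... + t^(l-1)\<close> into \<open>t + ... + t^l\<close>.\<close>

lemma sum_color_monoms:
  assumes "1 \<le> l"
  shows "(\<Sum>e<l. monom (1::nat) (if e = 0 \<and> P then l else e)) = geom_poly l * monom 1 (if P then 1 else 0)"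
proof (cases P)
  case True
  obtain m where l: "l = Suc m" using assms by (cases l) auto
  have "(\<Sum>e<l. monom (1::nat) (if e = 0 then l else e)) = monom 1 l + (\<Sum>e<m. monom 1 (Suc e))"
    unfolding l sum.lessThan_Suc_shift by simp
  also have "\<dots> = (\<Sum>e<l. monom 1 (Suc e))"
    by (simp add: l add.commute)
  also have "\<dots> = geom_poly l * monom 1 1"
    by (simp add: geom_poly_def sum_distrib_right mult_monom)
  finally show ?thesis using True by simp
next
  case False
  have "monom (1::nat) 0 = 1" by (simp add: monom_0 one_pCons)
  with False show ?thesis by (simp add: geom_poly_def)
qed

lemma colored_eulerian_eq:
  assumes "1 \<le> l"
  shows "colored_eulerian l n = geom_poly l ^ n * eulerian_poly n"
proof -
  let ?colors = "{\<epsilon>. (\<forall>i\<in>{1..n}. \<epsilon> i \<in> {..<l}) \<and> (\<forall>i. i \<notin> {1..n} \<longrightarrow> \<epsilon> i = 0)}"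
  have "colored_perms l n = {\<sigma>. \<sigma> permutes {1..n}} \<times> ?colors"
    by (auto simp: colored_perms_def)
  then have "colored_eulerian l n = (\<Sum>\<sigma> | \<sigma> permutes {1..n}. \<Sum>\<epsilon>\<in>?colors. monom 1 (fexc l n (\<sigma>, \<epsilon>)))"
    by (simp add: colored_eulerian_def sum.cartesian_product)
  also have "\<dots> = (\<Sum>\<sigma> | \<sigma> permutes {1..n}. geom_poly l ^ n * monom 1 (perm_exc n \<sigma>))"
  proof (rule sum.cong[OF refl])
    fix \<sigma>
    have "(\<Sum>\<epsilon>\<in>?colors. monom 1 (fexc l n (\<sigma>, \<epsilon>)))
        = (\<Prod>i\<in>{1..n}. \<Sum>e<l. monom 1 (if e = 0 \<and> i < \<sigma> i then l else e))"
      unfolding fexc_eq_sum monom_one_sum by (rule prod_sum_dflt[symmetric]) auto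
    also have "\<dots> = (\<Prod>i\<in>{1..n}. geom_poly l * monom 1 (if i < \<sigma> i then 1 else 0))"
      using sum_color_monoms[OF assms] by simp
    also have "\<dots> = geom_poly l ^ n * (\<Prod>i\<in>{1..n}. monom 1 (if i < \<sigma> i then 1 else 0))"
      by (simp only: prod.distrib prod_constant) simp
    also have "\<dots> = geom_poly l ^ n * monom 1 (perm_exc n \<sigma>)"
      unfolding monom_one_sum[symmetric] perm_exc_def card_filter_eq_sum[OF finite_atLeastAtMost] ..
    finally show "(\<Sum>\<epsilon>\<in>?colors. monom 1 (fexc l n (\<sigma>, \<epsilon>))) = geom_poly l ^ n * monom 1 (perm_exc n \<sigma>)" .
  qed
  also have "\<dots> = geom_poly l ^ n * eulerian_poly n"
    by (simp add: eulerian_poly_def sum_distrib_left)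
  finally show ?thesis .
qed

theorem proposition4p8:
  fixes l n :: nat
  assumes "l \<ge> 1" and "n \<ge> 1"
  shows "t_symmetric (colored_eulerian l n) \<and> log_concave_poly (colored_eulerian l n)
         \<and> t_unimodal (colored_eulerian l n)"
proof -
  have "sym_log_concave_poly (colored_eulerian l n)"
    unfolding colored_eulerian_eq[OF assms(1)]
    using assms
    by (intro sym_log_concave_poly_mult sym_log_concave_poly_power
        sym_log_concave_poly_geom_poly sym_log_concave_poly_eulerian_poly)
  then show ?thesis
    by (simp add: t_symmetric_if_sym_log_concave_poly log_concave_poly_if_sym_log_concave_poly
        t_unimodal_if_sym_log_concave_poly)
qed

end
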